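(* Let $k$ be even, $1\le s\le k-1$, and let $G$ be a $k$-uniform $s$-cycle with $m$ edges and $n=m(k-s)$ vertices. Assume that $k=q(k-s)$ for some integer $q$, and write $q=2^{t_0}(2l_0+1)$ with nonnegative integers $t_0,l_0$. Then $G$ is odd-bipartite if and only if $m$ is a multiple of $2^{t_0}$.
   Context: A $k$-uniform $s$-cycle with $m$ edges has vertex set $\mathbb{Z}_n$, $n=m(k-s)$ (vertex $n+i$ identified with $i$), and edges $e_j=\{j(k-s)+1,\ldots,j(k-s)+k\}$, $j=0,\ldots,m-1$; it is assumed that $n\ge 2k-s$. A $k$-uniform hypergraph with $k$ even and vertex set $V$ is odd-bipartite if either it has no edges or there is a partition $V=V_1\cup V_2$ with $V_1,V_2\ne\emptyset$ such that every edge intersects $V_1$ in an odd number of vertices. *)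

theory Defs
  imports Main
begin

text \<open>Vertex set of the k-uniform s-cycle with m edges: Z_n represented as {0..<n}, n = m(k-s).
  Edge e_j = {j(k-s)+1, ..., j(k-s)+k}, taken mod n.\<close>

definition scycle_vertices :: "nat \<Rightarrow> nat \<Rightarrow> nat \<Rightarrow> nat set" where
  "scycle_vertices k s m = {0..<m * (k - s)}"

definition scycle_edge :: "nat \<Rightarrow> nat \<Rightarrow> nat \<Rightarrow> nat \<Rightarrow> nat set" where
  "scycle_edge k s m j = (\<lambda>i. (j * (k - s) + i) mod (m * (k - s))) ` {1..k}"

definition scycle_edges :: "nat \<Rightarrow> nat \<Rightarrow> nat \<Rightarrow> nat set set" where
  "scycle_edges k s m = {scycle_edge k s m j | j. j < m}"

definition odd_bipartite :: "'a set \<Rightarrow> 'a set set \<Rightarrow> bool" where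
  "odd_bipartite V E \<longleftrightarrow> E = {} \<or>
     (\<exists>V1 V2. V1 \<union> V2 = V \<and> V1 \<inter> V2 = {} \<and> V1 \<noteq> {} \<and> V2 \<noteq> {} \<and>
        (\<forall>e\<in>E. odd (card (e \<inter> V1))))"

end

theory Submission
  imports Defs
begin

text \<open>
  Write \<open>d = k - s\<close> and cut \<open>\<int>\<^sub>n\<close>, \<open>n = m d\<close>, into the \<open>m\<close> blocks \<open>{r d + 1, \<dots>, r d + d}\<close>,
  indexed cyclically by \<open>r\<close>.  Since \<open>k = q d\<close>, the edge \<open>e\<^sub>j\<close> is the union of the \<open>q\<close> consecutive
  blocks \<open>j, \<dots>, j + q - 1\<close>.  If \<open>y\<^sub>r\<close> counts the vertices of \<open>V\<^sub>1\<close> in block \<open>r\<close>, all edges meet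
  \<open>V\<^sub>1\<close> oddly iff every window of \<open>q\<close> consecutive terms of the \<open>m\<close>-periodic sequence \<open>y\<close> has
  odd sum.  Comparing two consecutive windows shows that the parity of \<open>y\<close> is then also
  \<open>q\<close>-periodic, hence \<open>g\<close>-periodic for \<open>g = gcd q m\<close>, so a window has sum congruent to
  \<open>q/g\<close> times a fixed number; thus \<open>q/g\<close> is odd and \<open>2\<^sup>t\<^sup>0\<close> divides \<open>g\<close>, hence \<open>m\<close>.
  Conversely, if \<open>h = 2\<^sup>t\<^sup>0\<close> divides \<open>m\<close>, the multiples of \<open>h d\<close> form a suitable \<open>V\<^sub>1\<close>: every
  window of \<open>q = (2 l\<^sub>0 + 1) h\<close> blocks contains exactly \<open>2 l\<^sub>0 + 1\<close> of them.
\<close>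

definition periodic :: "nat \<Rightarrow> (nat \<Rightarrow> 'a) \<Rightarrow> bool" where
  "periodic p f \<longleftrightarrow> (\<forall>x. f (x + p) = f x)"

lemma periodic_add_mult:
  assumes "periodic p f"
  shows "f (x + c * p) = f x"
proof (induction c)
  case (Suc c)
  have "f (x + Suc c * p) = f ((x + c * p) + p)"
    by (simp add: ac_simps)
  with assms Suc show ?case
    unfolding periodic_def by simp
qed simp

lemma periodic_mod:
  assumes "periodic p f"
  shows "f x = f (x mod p)"
  using periodic_add_mult[OF assms, of "x mod p" "x div p"] by simp

lemma periodic_gcd:
  assumes "periodic p f" "periodic q f"
  shows "periodic (gcd p q) f"
proof (cases "p = 0")
  case False
  then obtain a b where ab: "p * a = q * b + gcd p q"
    using bezout_nat by blast
  show ?thesis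
    unfolding periodic_def
  proof
    fix x
    have "f (x + gcd p q) = f (x + gcd p q + b * q)"
      using periodic_add_mult[OF assms(2)] by simp
    also have "x + gcd p q + b * q = x + a * p"
      using ab by (simp add: ac_simps)
    also have "f \<dots> = f x"
      using periodic_add_mult[OF assms(1)] .
    finally show "f (x + gcd p q) = f x" .
  qed
qed (use assms(2) in simp)

lemma sum_lessThan_shift_periodic:
  fixes w :: "nat \<Rightarrow> 'a::comm_monoid_add"
  assumes "periodic p w"
  shows "(\<Sum>i<p. w (a + i)) = (\<Sum>i<p. w i)"
proof (induction a)
  case (Suc a)
  show ?case
  proof (cases p)
    case (Suc p')
    have "(\<Sum>i<p. w (Suc a + i)) = (\<Sum>i<p'. w (a + Suc i)) + w (a + p)"
      using Suc by (simp add: ac_simps)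
    also have "\<dots> = w a + (\<Sum>i<p'. w (a + Suc i))"
      using assms unfolding periodic_def by (simp add: add.commute)
    also have "\<dots> = (\<Sum>i<p. w (a + i))"
      using Suc sum.lessThan_Suc_shift[of "\<lambda>i. w (a + i)" p'] by simp
    finally show ?thesis
      using \<open>(\<Sum>i<p. w (a + i)) = (\<Sum>i<p. w i)\<close> by simp
  qed simp
qed simp

lemma sum_lessThan_mult_periodic:
  fixes w :: "nat \<Rightarrow> 'a::comm_semiring_1"
  assumes "periodic p w"
  shows "(\<Sum>i<c * p. w (a + i)) = of_nat c * (\<Sum>i<p. w i)"
proof (induction c)
  case (Suc c)
  have "{..<Suc c * p} = {..<c * p} \<union> {c * p..<c * p + p}"
    by auto
  then have "(\<Sum>i<Suc c * p. w (a + i)) = (\<Sum>i<c * p. w (a + i)) + (\<Sum>i<p. w (a + c * p + i))"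
    by (simp add: sum.union_disjoint sum.shift_bounds_nat_ivl[of _ 0 "c * p" p, simplified]
        lessThan_atLeast0 ac_simps)
  also have "\<dots> = of_nat c * (\<Sum>i<p. w i) + (\<Sum>i<p. w i)"
    using Suc sum_lessThan_shift_periodic[OF assms, of "a + c * p"] by simp
  finally show ?case
    by (simp add: algebra_simps)
qed simp

lemma periodic_parity_of_odd_windows:
  fixes y :: "nat \<Rightarrow> nat"
  assumes "0 < q" and odd_windows: "\<And>j. odd (\<Sum>r<q. y (j + r))"
  shows "periodic q (\<lambda>r. y r mod 2)"
  unfolding periodic_def
proof
  fix j
  obtain q' where q': "q = Suc q'"
    using \<open>0 < q\<close> gr0_implies_Suc by blast
  have "(\<Sum>r<q. y (Suc j + r)) + y j = (\<Sum>r<q'. y (j + Suc r)) + y (j + q) + y j"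
    using q' by simp
  also have "\<dots> = (\<Sum>r<q. y (j + r)) + y (j + q)"
    using q' sum.lessThan_Suc_shift[of "\<lambda>r. y (j + r)" q'] by simp
  finally show "y (j + q) mod 2 = y j mod 2"
    using odd_windows[of j] odd_windows[of "Suc j"] by presburger
qed

lemma odd_quotient_gcd_of_odd_windows:
  fixes y :: "nat \<Rightarrow> nat"
  assumes "periodic m y" "0 < q" "\<And>j. odd (\<Sum>r<q. y (j + r))"
  shows "odd (q div gcd q m)"
proof -
  define g where "g = gcd q m"
  define z where "z r = y r mod 2" for r
  have "periodic m z"
    using assms(1) unfolding periodic_def z_def by simp
  then have "periodic g z"
    unfolding g_def z_def using periodic_gcd periodic_parity_of_odd_windows[OF assms(2,3)] by blast
  have "q = (q div g) * g"
    unfolding g_def by simp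
  then have "(\<Sum>r<q. z (0 + r)) = (q div g) * (\<Sum>i<g. z i)"
    using sum_lessThan_mult_periodic[OF \<open>periodic g z\<close>] by (metis of_nat_id)
  moreover have "odd (\<Sum>r<q. z r)"
    using assms(3)[of 0] mod_sum_eq[of y 2 "{..<q}"] unfolding z_def
    by (simp add: odd_iff_mod_2_eq_one)
  ultimately show ?thesis
    unfolding g_def by simp
qed

lemma pow2_dvd_of_odd_quotient_gcd:
  fixes q m t l :: nat
  assumes "q = 2 ^ t * (2 * l + 1)" "odd (q div gcd q m)"
  shows "2 ^ t dvd m"
proof -
  have "coprime (2 ^ t) (q div gcd q m)"
    using assms(2) by simp
  moreover have "2 ^ t dvd gcd q m * (q div gcd q m)"
    using assms(1) by simp
  ultimately have "2 ^ t dvd gcd q m"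
    using coprime_dvd_mult_left_iff by blast
  then show ?thesis
    using dvd_trans gcd_dvd2 by blast
qed

lemma sum_lessThan_mult_blocks:
  fixes f :: "nat \<Rightarrow> 'a::comm_monoid_add"
  shows "(\<Sum>i<q * d. f (a + i)) = (\<Sum>r<q. \<Sum>i<d. f (a + r * d + i))"
proof -
  have "(\<Sum>i\<in>{r * d..<r * d + d}. f (a + i)) = (\<Sum>i<d. f (a + r * d + i))" for r
    using sum.shift_bounds_nat_ivl[of "\<lambda>i. f (a + i)" 0 "r * d" d]
    by (simp add: lessThan_atLeast0 ac_simps)
  then show ?thesis
    using sum.nat_group[of "\<lambda>i. f (a + i)" d q] by simp
qed

lemma inj_on_add_mod:
  fixes a b n :: nat
  shows "inj_on (\<lambda>i. (a + i) mod n) {b..<b + n}"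
proof (rule linorder_inj_onI')
  fix i i' assume "i \<in> {b..<b + n}" "i' \<in> {b..<b + n}" "i < i'"
  then have "0 < i' - i" "i' - i < n"
    by auto
  then have "\<not> n dvd (a + i') - (a + i)"
    using nat_dvd_not_less by simp
  then show "(a + i) mod n \<noteq> (a + i') mod n"
    using \<open>i < i'\<close> mod_eq_dvd_iff_nat[of "a + i" "a + i'" n] by simp
qed

definition block_weight :: "nat \<Rightarrow> nat \<Rightarrow> nat set \<Rightarrow> nat \<Rightarrow> nat" where
  "block_weight d n V r = (\<Sum>i<d. if (r * d + i + 1) mod n \<in> V then 1 else 0)"

lemma periodic_block_weight: "periodic m (block_weight d (m * d) V)"
proof -
  have "((r + m) * d + i + 1) mod (m * d) = (r * d + i + 1) mod (m * d)" for r i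
    using mod_add_self2[of "r * d + i + 1" "m * d"] by (simp add: algebra_simps)
  then show ?thesis
    unfolding periodic_def block_weight_def by presburger
qed

lemma card_scycle_edge_Int:
  assumes "k < m * (k - s)" "k = q * (k - s)"
  shows "card (scycle_edge k s m j \<inter> V) = (\<Sum>r<q. block_weight (k - s) (m * (k - s)) V (j + r))"
proof -
  define d where "d = k - s"
  define g where "g i = (j * d + i) mod (m * d)" for i
  have "{1..k} \<subseteq> {1..<1 + m * d}"
    using assms(1) unfolding d_def by auto
  then have "inj_on g {1..k}"
    unfolding g_def using inj_on_add_mod inj_on_subset by blast
  have "scycle_edge k s m j \<inter> V = g ` {i \<in> {1..k}. g i \<in> V}"
    unfolding scycle_edge_def g_def d_def by auto
  then have "card (scycle_edge k s m j \<inter> V) = card {i \<in> {1..k}. g i \<in> V}"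
    using card_image inj_on_subset[OF \<open>inj_on g {1..k}\<close>] by (metis (no_types, lifting) mem_Collect_eq subsetI)
  also have "\<dots> = (\<Sum>i\<in>{1..k}. if g i \<in> V then 1 else 0)"
    by (simp add: sum.If_cases Int_def)
  also have "\<dots> = (\<Sum>i<q * d. if g (i + 1) \<in> V then 1 else 0)"
    using sum.atLeast1_atMost_eq[of "\<lambda>i. if g i \<in> V then 1 else 0" k] assms(2)
    unfolding d_def by simp
  also have "\<dots> = (\<Sum>r<q. block_weight d (m * d) V (j + r))"
    using sum_lessThan_mult_blocks[where f="\<lambda>x. if (x + 1) mod (m * d) \<in> V then 1 else 0"
        and a="j * d" and q=q and d=d]
    unfolding block_weight_def g_def by (simp add: algebra_simps)
  finally show ?thesis
    unfolding d_def .
qed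

lemma pow2_dvd_if_odd_bipartite_scycle:
  assumes "k < m * (k - s)" "k = q * (k - s)" "q = 2 ^ t * (2 * l + 1)"
    and "odd_bipartite (scycle_vertices k s m) (scycle_edges k s m)"
  shows "2 ^ t dvd m"
proof -
  define d where "d = k - s"
  define edge where "edge = scycle_edge k s m"
  have "0 < m" "0 < q"
    using assms(1,3) by (auto intro: gr0I)
  then have "edge 0 \<in> scycle_edges k s m"
    unfolding scycle_edges_def edge_def by auto
  then obtain V where V: "\<And>j. j < m \<Longrightarrow> odd (card (edge j \<inter> V))"
    using assms(4) unfolding odd_bipartite_def scycle_edges_def edge_def by blast
  define y where "y = block_weight d (m * d) V"
  have "periodic m y"
    unfolding y_def by (rule periodic_block_weight)
  then have "y (j + m + r) = y (j + r)" for j r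
    unfolding periodic_def by (metis add.commute add.left_commute)
  then have "periodic m (\<lambda>j. \<Sum>r<q. y (j + r))"
    unfolding periodic_def by simp
  then have "odd (\<Sum>r<q. y (j + r))" for j
    using periodic_mod V[of "j mod m"] \<open>0 < m\<close> card_scycle_edge_Int[OF assms(1,2)]
    unfolding y_def d_def edge_def by (metis mod_less_divisor)
  then have "odd (q div gcd q m)"
    using odd_quotient_gcd_of_odd_windows[OF \<open>periodic m y\<close> \<open>0 < q\<close>] by blast
  then show ?thesis
    using pow2_dvd_of_odd_quotient_gcd[OF assms(3)] by blast
qed

lemma sum_lessThan_mult_dvd:
  fixes h :: nat
  assumes "0 < h"
  shows "(\<Sum>r<u * h. if h dvd a + r then 1 else 0 :: nat) = u"
proof -
  have "periodic h (\<lambda>r. if h dvd r then 1 else 0 :: nat)"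
    unfolding periodic_def by simp
  moreover have "(\<Sum>i<h. if h dvd i then 1 else 0 :: nat) = 1"
  proof -
    obtain h' where "h = Suc h'"
      using assms gr0_implies_Suc by blast
    then show ?thesis
      by (simp add: sum.lessThan_Suc_shift nat_dvd_not_less del: sum.lessThan_Suc)
  qed
  ultimately show ?thesis
    using sum_lessThan_mult_periodic by fastforce
qed

lemma block_weight_multiples:
  assumes "h dvd m" "0 < m" "0 < d"
  shows "block_weight d (m * d) {v \<in> {0..<m * d}. h * d dvd v} r = (if h dvd r + 1 then 1 else 0)"
proof -
  obtain d' where d': "d = Suc d'"
    using \<open>0 < d\<close> gr0_implies_Suc by blast
  have "h * d dvd m * d"
    using assms(1) by simp
  then have mem: "x mod (m * d) \<in> {v \<in> {0..<m * d}. h * d dvd v} \<longleftrightarrow> h * d dvd x" for x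
    using assms \<open>h * d dvd m * d\<close> by (auto simp: dvd_mod_iff)
  have "\<not> d dvd r * d + (i + 1)" if "i < d'" for i
  proof -
    have "i + 1 < d"
      using that d' by simp
    then show ?thesis
      using dvd_add_right_iff[of d "r * d" "i + 1"] nat_dvd_not_less[of "i + 1" d] by simp
  qed
  then have "\<not> h * d dvd r * d + i + 1" if "i < d'" for i
    using that dvd_mult_right by (metis add.assoc)
  then have "(\<Sum>i<d'. if h * d dvd r * d + i + 1 then 1 else 0 :: nat) = 0"
    by simp
  moreover have "h * d dvd r * d + d' + 1 \<longleftrightarrow> h dvd r + 1"
  proof -
    have "r * d + d' + 1 = d * (r + 1)"
      using d' by simp
    moreover have "h * d dvd d * (r + 1) \<longleftrightarrow> h dvd r + 1"
      using \<open>0 < d\<close> by (metis mult.commute nat_mult_dvd_cancel_disj not_gr_zero)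
    ultimately show ?thesis
      by (simp only:)
  qed
  ultimately have "(\<Sum>i<Suc d'. if h * d dvd r * d + i + 1 then 1 else 0 :: nat) = (if h dvd r + 1 then 1 else 0)"
    by (simp only: sum.lessThan_Suc add_0)
  then show ?thesis
    unfolding block_weight_def mem d'[symmetric] .
qed

lemma odd_bipartite_scycle_if_dvd:
  assumes "k < m * (k - s)" "k = q * (k - s)" "q = h * u" "odd u" "h dvd m" "2 \<le> h * (k - s)"
  shows "odd_bipartite (scycle_vertices k s m) (scycle_edges k s m)"
proof -
  define d where "d = k - s"
  define V1 where "V1 = {v \<in> {0..<m * d}. h * d dvd v}"
  define V2 where "V2 = {v \<in> {0..<m * d}. \<not> h * d dvd v}"
  have "h * d \<noteq> 0"
    using assms(6) unfolding d_def by linarith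
  then have "0 < h" "0 < d"
    by auto
  have "0 < m"
    using assms(1) by (auto intro: gr0I)
  have "odd (card (scycle_edge k s m j \<inter> V1))" for j
  proof -
    have "card (scycle_edge k s m j \<inter> V1) = (\<Sum>r<u * h. block_weight d (m * d) V1 (j + r))"
      using card_scycle_edge_Int[OF assms(1,2)] assms(3) unfolding d_def by (simp add: mult.commute)
    also have "\<dots> = (\<Sum>r<u * h. if h dvd (j + 1) + r then 1 else 0)"
      using block_weight_multiples[OF assms(5) \<open>0 < m\<close> \<open>0 < d\<close>] unfolding V1_def by simp
    also have "\<dots> = u"
      using sum_lessThan_mult_dvd[OF \<open>0 < h\<close>] .
    finally show ?thesis
      using assms(4) by simp
  qed
  moreover have "0 \<in> V1"
    using \<open>0 < m\<close> \<open>0 < d\<close> unfolding V1_def by simp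
  moreover have "1 \<in> V2"
  proof -
    have "0 < u"
      using assms(4) by (rule odd_pos)
    then have "h * d \<le> q * d"
      using assms(3) by simp
    also have "q * d = k"
      using assms(2) unfolding d_def by (rule sym)
    finally have "h * d \<le> k" .
    then show ?thesis
      using assms(1,6) unfolding V2_def d_def by (auto dest: dvd_imp_le)
  qed
  moreover have "V1 \<union> V2 = scycle_vertices k s m" "V1 \<inter> V2 = {}"
    unfolding V1_def V2_def scycle_vertices_def d_def by auto
  ultimately show ?thesis
    unfolding odd_bipartite_def scycle_edges_def by blast
qed

theorem theorem4p1:
  fixes k s m q t0 l0 :: nat
  assumes "even k"
    and "1 \<le> s" and "s \<le> k - 1"
    and "m * (k - s) \<ge> 2 * k - s"
    and "k = q * (k - s)"
    and "q = 2 ^ t0 * (2 * l0 + 1)"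
  shows "odd_bipartite (scycle_vertices k s m) (scycle_edges k s m) \<longleftrightarrow> 2 ^ t0 dvd m"
proof
  have "k < m * (k - s)"
    using assms(1-4) by (cases k) auto
  then show "odd_bipartite (scycle_vertices k s m) (scycle_edges k s m) \<Longrightarrow> 2 ^ t0 dvd m"
    using pow2_dvd_if_odd_bipartite_scycle assms(5,6) by blast
  \<comment> \<open>This makes \<open>V\<^sub>2\<close> nonempty; evenness of \<open>k\<close> is needed only when \<open>k - s = 1\<close>.\<close>
  have "2 \<le> 2 ^ t0 * (k - s)"
  proof (cases "k - s = 1")
    case True
    then have "t0 \<noteq> 0"
      using assms(1,5,6) by auto
    with True show ?thesis
      by (simp add: self_le_power)
  next
    case False
    have "k - s \<le> 2 ^ t0 * (k - s)"
      by simp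
    with False show ?thesis
      using assms(2,3) by linarith
  qed
  then show "2 ^ t0 dvd m \<Longrightarrow> odd_bipartite (scycle_vertices k s m) (scycle_edges k s m)"
    using odd_bipartite_scycle_if_dvd[of k m s q "2 ^ t0" "2 * l0 + 1"] \<open>k < m * (k - s)\<close> assms(5,6)
    by simp
qed

end
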